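(* For every integer $m\geqslant 3$, the binary extended Hamming code $\overline{\mathcal{H}}_m$ of length $2^m$ is log-concave.
   Context: The binary Hamming code $\mathcal{H}_m$ is the binary linear code of length $2^m-1$ whose parity-check matrix has as columns all nonzero vectors of $\mathbb{F}_2^m$; the extended Hamming code $\overline{\mathcal{H}}_m$ is obtained by appending an overall parity-check coordinate to every codeword of $\mathcal{H}_m$ (equivalently, it is the dual of the first order binary Reed–Muller code $\mathcal R(1,m)$). For a linear code of length $n$, $A_i$ is the number of codewords of weight $i$. The nonzero weight distribution is the subsequence $a_0,\dots,a_N$ of $A_0,\dots,A_n$ consisting of its nonzero values, in order. A sequence is log-concave if $a_i^2\geqslant a_{i-1}a_{i+1}$ for all $1\leqslant i\leqslant N-1$; a linear code is log-concave if its nonzero weight distribution is log-concave. *)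

theory Defs
  imports Main
begin

text \<open>Vectors of F_2^m are boolean lists of length m (True = 1).
  A binary word is represented by its support (set of coordinates carrying 1);
  its Hamming weight is the cardinality of the support.\<close>

definition vecs :: "nat \<Rightarrow> bool list set" where
  "vecs m = {v. length v = m}"

definition nonzero_vecs :: "nat \<Rightarrow> bool list set" where
  "nonzero_vecs m = vecs m - {replicate m False}"

text \<open>Binary Hamming code H_m: coordinates are indexed by the nonzero vectors of F_2^m
  (the columns of the parity-check matrix, 2^m - 1 of them); a word (support S) is a codeword
  iff the sum of the columns in S is zero in F_2^m, i.e. every coordinate i < m is 1 in an
  even number of the columns of S.\<close>

definition hamming_code :: "nat \<Rightarrow> bool list set set" where
  "hamming_code m = {S. S \<subseteq> nonzero_vecs m \<and> (\<forall>i<m. even (card {v\<in>S. v ! i}))}"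

text \<open>Extended Hamming code: coordinates Some v (v nonzero) plus the appended overall
  parity-check coordinate None; the parity bit is 1 iff the codeword has odd weight.\<close>

definition ext_hamming_code :: "nat \<Rightarrow> bool list option set set" where
  "ext_hamming_code m =
     (\<lambda>S. Some ` S \<union> (if odd (card S) then {None} else {})) ` hamming_code m"

definition weight_count :: "'a set set \<Rightarrow> nat \<Rightarrow> nat" where
  "weight_count C i = card {c \<in> C. card c = i}"

definition nonzero_weight_distribution :: "nat \<Rightarrow> 'a set set \<Rightarrow> nat list" where
  "nonzero_weight_distribution n C = filter (\<lambda>x. x \<noteq> 0) (map (weight_count C) [0..<Suc n])"

definition log_concave_seq :: "nat list \<Rightarrow> bool" where
  "log_concave_seq a \<longleftrightarrow>
     (\<forall>i. 1 \<le> i \<and> i + 1 < length a \<longrightarrow> a ! (i - 1) * a ! (i + 1) \<le> (a ! i)^2)"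

definition log_concave_code :: "nat \<Rightarrow> 'a set set \<Rightarrow> bool" where
  "log_concave_code n C \<longleftrightarrow> log_concave_seq (nonzero_weight_distribution n C)"

end

theory Submission
  imports Defs Complex_Main
begin

text \<open>Read the coordinates of the extended Hamming code as the points of \<open>\<bbbF>\<^sub>2\<^sup>m\<close>,
  the zero vector playing the parity coordinate: the codewords of weight \<open>w\<close> are then the
  \<open>w\<close>-sets of points with zero sum, \<open>w\<close> even. Sorting the \<open>(k + 1)\<close>-sets of points by
  whether they contain their own sum gives
  \<open>C(2\<^sup>m, k + 1) = (k + 2) Z\<^sub>k\<^sub>+\<^sub>2 + (2\<^sup>m - k) Z\<^sub>k\<close> for the numbers \<open>Z\<^sub>k\<close> of zero-sum
  \<open>k\<close>-sets, which solves to \<open>2n A\<^sub>2\<^sub>j = C(2n, 2j) + (-1)\<^sup>j (2n - 1) C(n, j)\<close> with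
  \<open>n = 2\<^sup>m\<^sup>-\<^sup>1\<close>. The nonzero weight distribution is \<open>1, A\<^sub>4, \<dots>, A\<^sub>2\<^sub>n\<^sub>-\<^sub>4, 1\<close>. For even
  \<open>j\<close> log-concavity at \<open>A\<^sub>2\<^sub>j\<close> follows from that of the two binomial terms; for odd \<open>j\<close>
  the alternating term is small, since
  \<open>(2n - 1)(2n - 3)(2n - 5) C(n, j) \<le> 15 C(2n, 2j)\<close> for \<open>3 \<le> j \<le> n / 2\<close>, and the cross
  terms are controlled by ratio estimates for binomial coefficients. The case \<open>m = 4\<close> is
  checked numerically and the ends of the sequence separately.\<close>

section \<open>Zero-sum sets of vectors\<close>

definition coord_count :: "bool list set \<Rightarrow> nat \<Rightarrow> nat" where
  "coord_count T i = card {v \<in> T. v ! i}"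

definition vec_sum :: "nat \<Rightarrow> bool list set \<Rightarrow> bool list" where
  "vec_sum m T = map (\<lambda>i. odd (coord_count T i)) [0..<m]"

definition zero_sum :: "nat \<Rightarrow> bool list set \<Rightarrow> bool" where
  "zero_sum m T \<longleftrightarrow> (\<forall>i<m. even (coord_count T i))"

definition zero_sum_sets :: "nat \<Rightarrow> nat \<Rightarrow> bool list set set" where
  "zero_sum_sets m k = {T. T \<subseteq> vecs m \<and> card T = k \<and> zero_sum m T}"

lemma vecs_eq_lists: "vecs m = {xs. set xs \<subseteq> UNIV \<and> length xs = m}"
  by (simp add: vecs_def)

lemma finite_vecs [simp]: "finite (vecs m)"
  unfolding vecs_eq_lists by (rule finite_lists_length_eq) simp

lemma card_vecs: "card (vecs m) = 2 ^ m"
  unfolding vecs_eq_lists by (subst card_lists_length_eq) simp_all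

lemma finite_subset_vecs: "T \<subseteq> vecs m \<Longrightarrow> finite T"
  by (rule finite_subset[OF _ finite_vecs])

lemma length_vec_sum [simp]: "length (vec_sum m T) = m"
  by (simp add: vec_sum_def)

lemma coord_count_insert:
  assumes "finite T" "x \<notin> T"
  shows "coord_count (insert x T) i = coord_count T i + (if x ! i then 1 else 0)"
proof -
  have "{v \<in> insert x T. v ! i} = (if x ! i then insert x {v \<in> T. v ! i} else {v \<in> T. v ! i})"
    by auto
  then show ?thesis
    using assms unfolding coord_count_def by auto
qed

lemma vec_sum_insert_nth:
  assumes "finite T" "x \<notin> T" "i < m"
  shows "vec_sum m (insert x T) ! i = (vec_sum m T ! i \<noteq> x ! i)"
  using assms by (simp add: vec_sum_def coord_count_insert)

lemma zero_sum_iff_vec_sum: "zero_sum m T \<longleftrightarrow> vec_sum m T = replicate m False"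
  by (auto simp: zero_sum_def vec_sum_def list_eq_iff_nth_eq)

lemma zero_sum_insert_iff:
  assumes "finite T" "x \<notin> T" "length x = m"
  shows "zero_sum m (insert x T) \<longleftrightarrow> x = vec_sum m T"
  using assms by (auto simp: zero_sum_iff_vec_sum list_eq_iff_nth_eq vec_sum_insert_nth)

lemma vec_sum_insert_eq_iff:
  assumes "finite T" "x \<notin> T" "length x = m"
  shows "vec_sum m (insert x T) = x \<longleftrightarrow> zero_sum m T"
  using assms by (auto simp: zero_sum_iff_vec_sum list_eq_iff_nth_eq vec_sum_insert_nth)

lemma finite_zero_sum_sets: "finite (zero_sum_sets m k)"
  by (rule finite_subset[of _ "Pow (vecs m)"]) (auto simp: zero_sum_sets_def)

lemma card_pairs_in_zero_sum_sets:
  "card (SIGMA R:zero_sum_sets m k. R) = k * card (zero_sum_sets m k)"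
  by (subst card_SigmaI) (auto simp: finite_zero_sum_sets zero_sum_sets_def finite_subset_vecs)

lemma card_pairs_outside_zero_sum_sets:
  "card (SIGMA R:zero_sum_sets m k. vecs m - R) = (2 ^ m - k) * card (zero_sum_sets m k)"
proof -
  have "card (SIGMA R:zero_sum_sets m k. vecs m - R) = (\<Sum>R\<in>zero_sum_sets m k. card (vecs m - R))"
    by (simp add: card_SigmaI finite_zero_sum_sets)
  also have "\<dots> = (\<Sum>R\<in>zero_sum_sets m k. 2 ^ m - k)"
    by (rule sum.cong)
      (auto simp: zero_sum_sets_def card_Diff_subset card_vecs finite_subset_vecs)
  finally show ?thesis
    by simp
qed

text \<open>A \<open>(k + 1)\<close>-set \<open>T\<close> not containing its sum \<open>s\<close> is a zero-sum \<open>(k + 2)\<close>-set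
  \<open>T \<union> {s}\<close> with a marked element \<open>s\<close>; one containing its sum is a zero-sum \<open>k\<close>-set
  \<open>T - {s}\<close> together with an element \<open>s\<close> outside it.\<close>

lemma card_subsets_without_vec_sum:
  "card {T. T \<subseteq> vecs m \<and> card T = Suc k \<and> vec_sum m T \<notin> T}
     = Suc (Suc k) * card (zero_sum_sets m (Suc (Suc k)))"
proof -
  let ?S = "{T. T \<subseteq> vecs m \<and> card T = Suc k \<and> vec_sum m T \<notin> T}"
  let ?P = "SIGMA R:zero_sum_sets m (Suc (Suc k)). R"
  let ?f = "\<lambda>T. (insert (vec_sum m T) T, vec_sum m T)" and ?g = "\<lambda>(R, x). R - {x}"
  have removed: "R - {x} \<in> ?S \<and> vec_sum m (R - {x}) = x"
    if R: "R \<in> zero_sum_sets m (Suc (Suc k))" and "x \<in> R" for R x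
  proof -
    from that have "insert x (R - {x}) = R" "finite R" "length x = m"
      by (auto simp: zero_sum_sets_def vecs_def finite_subset_vecs)
    with R \<open>x \<in> R\<close> show ?thesis
      using zero_sum_insert_iff[of "R - {x}" x m] by (auto simp: zero_sum_sets_def)
  qed
  have added: "insert (vec_sum m T) T \<in> zero_sum_sets m (Suc (Suc k))" if "T \<in> ?S" for T
    using that zero_sum_insert_iff[of T "vec_sum m T" m]
    by (auto simp: zero_sum_sets_def finite_subset_vecs vecs_def)
  have "bij_betw ?f ?S ?P"
  proof (rule bij_betw_byWitness[where f' = ?g])
    show "\<forall>p \<in> ?P. ?f (?g p) = p"
    proof
      fix p assume "p \<in> ?P"
      then obtain R x where p: "p = (R, x)" "R \<in> zero_sum_sets m (Suc (Suc k))" "x \<in> R"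
        by auto
      with removed[OF p(2,3)] show "?f (?g p) = p"
        by (simp add: insert_absorb)
    qed
    show "\<forall>T \<in> ?S. ?g (?f T) = T"
      by auto
    show "?f ` ?S \<subseteq> ?P"
      using added by auto
    show "?g ` ?P \<subseteq> ?S"
      using removed by fastforce
  qed
  then have "card ?S = card ?P"
    by (rule bij_betw_same_card)
  then show ?thesis
    by (simp only: card_pairs_in_zero_sum_sets)
qed

lemma card_subsets_with_vec_sum:
  "card {T. T \<subseteq> vecs m \<and> card T = Suc k \<and> vec_sum m T \<in> T}
     = (2 ^ m - k) * card (zero_sum_sets m k)"
proof -
  let ?S = "{T. T \<subseteq> vecs m \<and> card T = Suc k \<and> vec_sum m T \<in> T}"
  let ?P = "SIGMA R:zero_sum_sets m k. vecs m - R"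
  let ?f = "\<lambda>T. (T - {vec_sum m T}, vec_sum m T)" and ?g = "\<lambda>(R, x). insert x R"
  have removed: "T - {vec_sum m T} \<in> zero_sum_sets m k" if "T \<in> ?S" for T
  proof -
    from that have "insert (vec_sum m T) (T - {vec_sum m T}) = T" "finite T"
      by (auto simp: finite_subset_vecs)
    with that show ?thesis
      using vec_sum_insert_eq_iff[of "T - {vec_sum m T}" "vec_sum m T" m]
      by (auto simp: zero_sum_sets_def)
  qed
  have added: "insert x R \<in> ?S \<and> vec_sum m (insert x R) = x"
    if "R \<in> zero_sum_sets m k" "x \<in> vecs m - R" for R x
    using that vec_sum_insert_eq_iff[of R x m]
    by (auto simp: zero_sum_sets_def finite_subset_vecs vecs_def)
  have "bij_betw ?f ?S ?P"
  proof (rule bij_betw_byWitness[where f' = ?g])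
    show "\<forall>p \<in> ?P. ?f (?g p) = p"
    proof
      fix p assume "p \<in> ?P"
      then obtain R x where p: "p = (R, x)" "R \<in> zero_sum_sets m k" "x \<in> vecs m - R"
        by auto
      with added[OF p(2,3)] show "?f (?g p) = p"
        by auto
    qed
    show "\<forall>T \<in> ?S. ?g (?f T) = T"
      by auto
    show "?f ` ?S \<subseteq> ?P"
      using removed by auto
    show "?g ` ?P \<subseteq> ?S"
      using added by fastforce
  qed
  then have "card ?S = card ?P"
    by (rule bij_betw_same_card)
  then show ?thesis
    by (simp only: card_pairs_outside_zero_sum_sets)
qed

lemma zero_sum_sets_recurrence:
  "(2 ^ m choose Suc k)
     = Suc (Suc k) * card (zero_sum_sets m (Suc (Suc k))) + (2 ^ m - k) * card (zero_sum_sets m k)"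
proof -
  let ?P = "{T. T \<subseteq> vecs m \<and> card T = Suc k}"
  have "(2 ^ m choose Suc k) = card ?P"
    by (simp add: n_subsets card_vecs)
  also have "?P = {T \<in> ?P. vec_sum m T \<notin> T} \<union> {T \<in> ?P. vec_sum m T \<in> T}"
    by blast
  also have "card \<dots> = card {T \<in> ?P. vec_sum m T \<notin> T} + card {T \<in> ?P. vec_sum m T \<in> T}"
    by (rule card_Un_disjoint) (auto intro: finite_subset[of _ "Pow (vecs m)"])
  finally show ?thesis
    using card_subsets_without_vec_sum[of m k] card_subsets_with_vec_sum[of m k] by (simp add: conj_assoc)
qed

section \<open>The extended Hamming code\<close>

definition ext_coord :: "nat \<Rightarrow> bool list \<Rightarrow> bool list option" where
  "ext_coord m v = (if v = replicate m False then None else Some v)"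

lemma inj_ext_coord: "inj (ext_coord m)"
  by (rule injI) (auto simp: ext_coord_def split: if_splits)

lemma hamming_code_eq: "hamming_code m = {S. S \<subseteq> nonzero_vecs m \<and> zero_sum m S}"
  by (simp add: hamming_code_def zero_sum_def coord_count_def)

lemma zero_sum_insert_zero: "zero_sum m (insert (replicate m False) S) \<longleftrightarrow> zero_sum m S"
proof -
  have "{v \<in> insert (replicate m False) S. v ! i} = {v \<in> S. v ! i}" if "i < m" for i
    using that by auto
  then show ?thesis
    by (simp add: zero_sum_def coord_count_def)
qed

lemma zero_sum_remove_zero: "zero_sum m (S - {replicate m False}) \<longleftrightarrow> zero_sum m S"
  by (metis insert_Diff_single zero_sum_insert_zero)

text \<open>Adjoining the zero vector to the odd-weight Hamming codewords turns them into even-size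
  zero-sum sets, and the parity coordinate into the zero vector.\<close>

lemma ext_hamming_code_eq:
  "ext_hamming_code m
     = (`) (ext_coord m) ` {T. T \<subseteq> vecs m \<and> zero_sum m T \<and> even (card T)}"
proof -
  define z where "z = replicate m False"
  define adjoin where "adjoin S = (if odd (card S) then insert z S else S)" for S
  have nz: "nonzero_vecs m = vecs m - {z}"
    by (simp add: nonzero_vecs_def z_def)
  have H: "S \<subseteq> vecs m \<and> z \<notin> S \<and> zero_sum m S \<and> finite S" if "S \<in> hamming_code m" for S
    using that finite_subset_vecs[of S m] by (auto simp: hamming_code_eq nz)
  have "Some ` S \<union> (if odd (card S) then {None} else {}) = ext_coord m ` adjoin S"
    if "S \<in> hamming_code m" for S
    using H[OF that] by (auto simp: adjoin_def ext_coord_def z_def)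
  then have "ext_hamming_code m = (`) (ext_coord m) ` adjoin ` hamming_code m"
    unfolding ext_hamming_code_def image_image by (rule image_cong[OF refl])
  also have "adjoin ` hamming_code m = {T. T \<subseteq> vecs m \<and> zero_sum m T \<and> even (card T)}"
  proof (intro equalityI subsetI)
    fix T assume "T \<in> adjoin ` hamming_code m"
    then obtain S where "S \<in> hamming_code m" "T = adjoin S"
      by blast
    with H[of S] show "T \<in> {T. T \<subseteq> vecs m \<and> zero_sum m T \<and> even (card T)}"
      by (auto simp: adjoin_def z_def zero_sum_insert_zero vecs_def)
  next
    fix T assume T: "T \<in> {T. T \<subseteq> vecs m \<and> zero_sum m T \<and> even (card T)}"
    then have "finite T"
      using finite_subset_vecs by blast
    have "T - {z} \<in> hamming_code m"
      using T by (auto simp: hamming_code_eq nz z_def zero_sum_remove_zero)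
    moreover have "adjoin (T - {z}) = T"
      using T \<open>finite T\<close> by (cases "z \<in> T") (auto simp: adjoin_def insert_absorb)
    ultimately show "T \<in> adjoin ` hamming_code m"
      by (metis image_eqI)
  qed
  finally show ?thesis .
qed

lemma weight_count_ext_hamming_code:
  "weight_count (ext_hamming_code m) w = (if even w then card (zero_sum_sets m w) else 0)"
proof -
  let ?E = "{T. T \<subseteq> vecs m \<and> zero_sum m T \<and> even (card T)}"
  have inj: "inj_on ((`) (ext_coord m)) A" for A
    using inj_ext_coord by (simp add: inj_on_def inj_image_eq_iff)
  have card_eq: "card (ext_coord m ` T) = card T" for T
    by (rule card_image[OF inj_on_subset[OF inj_ext_coord subset_UNIV]])
  have "{X \<in> ext_hamming_code m. card X = w} = (`) (ext_coord m) ` {T \<in> ?E. card T = w}"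
    by (auto simp: ext_hamming_code_eq card_eq)
  then have "weight_count (ext_hamming_code m) w = card {T \<in> ?E. card T = w}"
    by (simp add: weight_count_def card_image[OF inj])
  also have "{T \<in> ?E. card T = w} = (if even w then zero_sum_sets m w else {})"
    by (auto simp: zero_sum_sets_def)
  finally show ?thesis
    by simp
qed

section \<open>Binomial estimates\<close>

lemma binomial_Suc_real:
  "real (Suc k) * real (N choose Suc k) = (real N - real k) * real (N choose k)"
proof (cases "k \<le> N")
  case True
  have "Suc k * (N choose Suc k) = (N - k) * (N choose k)"
    by (simp only: binomial_absorption binomial_absorb_comp)
  then show ?thesis
    using True by (metis of_nat_diff of_nat_mult)
qed (simp add: binomial_eq_0)

definition binom_even :: "nat \<Rightarrow> nat \<Rightarrow> real" where
  "binom_even n j = real (2 * n choose (2 * j))"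

definition binom_half :: "nat \<Rightarrow> nat \<Rightarrow> real" where
  "binom_half n j = (2 * real n - 1) * real (n choose j)"

lemma binom_even_nonneg: "0 \<le> binom_even n j"
  by (simp add: binom_even_def)

lemma binom_even_pos: "j \<le> n \<Longrightarrow> 0 < binom_even n j"
  by (simp add: binom_even_def)

lemma binom_half_nonneg: "1 \<le> n \<Longrightarrow> 0 \<le> binom_half n j"
  by (simp add: binom_half_def)

lemma binom_even_Suc:
  "binom_even n (Suc j) * ((2 * real j + 1) * (2 * real j + 2))
     = binom_even n j * ((2 * real n - 2 * real j) * (2 * real n - 2 * real j - 1))"
proof -
  have "(2 * real j + 1) * real (2 * n choose Suc (2 * j))
      = (2 * real n - 2 * real j) * binom_even n j"
    using binomial_Suc_real[of "2 * j" "2 * n"] by (simp add: binom_even_def add.commute)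
  moreover have "(2 * real j + 2) * binom_even n (Suc j)
      = (2 * real n - 2 * real j - 1) * real (2 * n choose Suc (2 * j))"
    using binomial_Suc_real[of "Suc (2 * j)" "2 * n"] by (simp add: binom_even_def algebra_simps)
  ultimately show ?thesis
    by algebra
qed

lemma binom_half_Suc:
  "binom_half n (Suc j) * (real j + 1) = binom_half n j * (real n - real j)"
proof -
  have "(real j + 1) * real (n choose Suc j) = (real n - real j) * real (n choose j)"
    using binomial_Suc_real[of j n] by (simp add: add.commute)
  then show ?thesis
    unfolding binom_half_def by algebra
qed

lemma binom_half_one: "binom_half n 1 = binom_even n 1"
  using binom_even_Suc[of n 0] by (simp add: binom_half_def binom_even_def algebra_simps)

lemma binom_half_binom_even_Suc:
  assumes "j < n"
  shows "binom_half n (Suc j) * binom_even n j * (2 * real n - 2 * real j - 1)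
    = binom_half n j * binom_even n (Suc j) * (2 * real j + 1)"
proof -
  have "2 * (real n - real j) * (real j + 1) \<noteq> 0"
    using assms by simp
  moreover have "(binom_half n (Suc j) * binom_even n j * (2 * real n - 2 * real j - 1))
        * (2 * (real n - real j) * (real j + 1))
      = (binom_half n j * binom_even n (Suc j) * (2 * real j + 1)) * (2 * (real n - real j) * (real j + 1))"
    using binom_even_Suc[of n j] binom_half_Suc[of n j] by algebra
  ultimately show ?thesis
    by simp
qed

lemma binom_even_log_concave:
  assumes "1 \<le> j" "j < n"
  shows "binom_even n (j - 1) * binom_even n (j + 1) * (real j + 1) \<le> (binom_even n j)\<^sup>2 * real j"
proof -
  obtain i where j: "j = Suc i"
    using assms by (cases j) auto
  define x where "x = 2 * real j"
  define y where "y = 2 * real n - 2 * real j"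
  have x: "2 \<le> x" and y: "2 \<le> y"
    using assms by (simp_all add: x_def y_def)
  have lo: "binom_even n j * ((x - 1) * x) = binom_even n (j - 1) * ((y + 2) * (y + 1))"
    using binom_even_Suc[of n i] by (simp add: j x_def y_def algebra_simps)
  have hi: "binom_even n (j + 1) * ((x + 1) * (x + 2)) = binom_even n j * (y * (y - 1))"
    using binom_even_Suc[of n j] by (simp add: x_def y_def algebra_simps)
  have "(binom_even n (j - 1) * binom_even n (j + 1) * (x + 2)) * ((x + 1) * (y + 1) * (y + 2))
      = (binom_even n j)\<^sup>2 * x * ((x - 1) * y * (y - 1))"
    using lo hi by algebra
  also have "\<dots> \<le> (binom_even n j)\<^sup>2 * x * ((x + 1) * (y + 1) * (y + 2))"
    using x y by (intro mult_left_mono mult_mono) auto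
  finally have "binom_even n (j - 1) * binom_even n (j + 1) * (x + 2) \<le> (binom_even n j)\<^sup>2 * x"
    by (rule mult_right_le_imp_le) (use x y in auto)
  then show ?thesis
    by (simp add: x_def algebra_simps)
qed

lemma binom_half_log_concave:
  assumes "1 \<le> j" "j \<le> n"
  shows "binom_half n (j - 1) * binom_half n (j + 1) \<le> (binom_half n j)\<^sup>2"
proof -
  obtain i where j: "j = Suc i"
    using assms by (cases j) auto
  have lo: "binom_half n j * real j = binom_half n (j - 1) * (real n - real j + 1)"
    using binom_half_Suc[of n i] by (simp add: j algebra_simps)
  have hi: "binom_half n (j + 1) * (real j + 1) = binom_half n j * (real n - real j)"
    using binom_half_Suc[of n j] by simp
  have "(binom_half n (j - 1) * binom_half n (j + 1)) * ((real n - real j + 1) * (real j + 1))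
      = (binom_half n j)\<^sup>2 * (real j * (real n - real j))"
    using lo hi by algebra
  also have "\<dots> \<le> (binom_half n j)\<^sup>2 * ((real n - real j + 1) * (real j + 1))"
    using assms by (intro mult_left_mono) (auto simp: algebra_simps)
  finally show ?thesis
    by (rule mult_right_le_imp_le) (use assms in auto)
qed

lemma binom_even_binom_half_cross_le:
  assumes "1 \<le> j" "2 * j \<le> n"
  shows "binom_even n (j - 1) * binom_half n (j + 1) \<le> binom_even n j * binom_half n j"
proof -
  obtain i where j: "j = Suc i"
    using assms by (cases j) auto
  define x where "x = 2 * real j"
  define y where "y = 2 * real n - 2 * real j"
  have x: "2 \<le> x" and xy: "x \<le> y"
    using assms by (simp_all add: x_def y_def)
  have lo: "binom_even n j * ((x - 1) * x) = binom_even n (j - 1) * ((y + 2) * (y + 1))"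
    using binom_even_Suc[of n i] by (simp add: j x_def y_def algebra_simps)
  have hi: "binom_half n (j + 1) * (x + 2) = binom_half n j * y"
    using binom_half_Suc[of n j] by (simp add: x_def y_def algebra_simps)
  have "(binom_even n (j - 1) * binom_half n (j + 1)) * ((y + 1) * (x + 2) * (y + 2))
      = (binom_even n j * binom_half n j) * ((x - 1) * x * y)"
    using lo hi by algebra
  also have "\<dots> \<le> (binom_even n j * binom_half n j) * ((y + 1) * (x + 2) * (y + 2))"
    using assms x xy
    by (intro mult_left_mono mult_mono) (auto simp: binom_even_nonneg binom_half_nonneg)
  finally show ?thesis
    by (rule mult_right_le_imp_le) (use x xy in auto)
qed

lemma binom_half_binom_even_cross_le:
  assumes "1 \<le> j" "j < n"
  shows "binom_half n (j - 1) * binom_even n (j + 1) * (2 * real j + 1)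
    \<le> binom_even n j * binom_half n j * (2 * real n - 2 * real j)"
proof -
  obtain i where j: "j = Suc i"
    using assms by (cases j) auto
  define y where "y = 2 * real n - 2 * real j"
  have y: "2 \<le> y"
    using assms by (simp add: y_def)
  have lo: "binom_half n j * real j = binom_half n (j - 1) * ((y + 2) / 2)"
    using binom_half_Suc[of n i] by (simp add: j y_def algebra_simps)
  have hi: "binom_even n (j + 1) * ((2 * real j + 1) * (2 * real j + 2)) = binom_even n j * (y * (y - 1))"
    using binom_even_Suc[of n j] by (simp add: y_def algebra_simps)
  have "(binom_half n (j - 1) * binom_even n (j + 1) * (2 * real j + 1)) * ((real j + 1) * (y + 2))
      = (binom_even n j * binom_half n j * y) * (real j * (y - 1))"
    using lo hi by algebra
  also have "\<dots> \<le> (binom_even n j * binom_half n j * y) * ((real j + 1) * (y + 2))"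
    using assms y
    by (intro mult_left_mono mult_mono) (auto simp: binom_even_nonneg binom_half_nonneg)
  finally show ?thesis
    unfolding y_def by (rule mult_right_le_imp_le) (use y in \<open>auto simp: y_def\<close>)
qed

text \<open>The quotient \<open>binom_half n j / binom_even n j\<close> is \<open>1\<close> at \<open>j = 1\<close> and is then multiplied
  by \<open>(2j + 1) / (2n - 2j - 1) \<le> 1\<close> at each step while \<open>2j < n\<close>; at \<open>j = 3\<close> the bound
  is an equality.\<close>

lemma binom_half_le_binom_even:
  assumes "3 \<le> j" "2 * j \<le> n"
  shows "(2 * real n - 3) * (2 * real n - 5) * binom_half n j \<le> 15 * binom_even n j"
  using assms
proof (induction j rule: dec_induct)
  case base
  have "binom_half n 2 * binom_even n 1 * (2 * real n - 3) = binom_half n 1 * binom_even n 2 * 3"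
    using binom_half_binom_even_Suc[of 1 n] base by (simp add: numeral_2_eq_2)
  then have two: "binom_half n 2 * (2 * real n - 3) = 3 * binom_even n 2"
    using binom_even_pos[of 1 n] base binom_half_one[of n] by simp
  have "binom_half n 3 * binom_even n 2 * (2 * real n - 5) = binom_half n 2 * binom_even n 3 * 5"
    using binom_half_binom_even_Suc[of 2 n] base by (simp add: numeral_eq_Suc)
  then have "binom_even n 2 * ((2 * real n - 3) * (2 * real n - 5) * binom_half n 3)
      = binom_even n 2 * (15 * binom_even n 3)"
    using two by algebra
  then show ?case
    using binom_even_pos[of 2 n] base by simp
next
  case (step j)
  define K where "K = (2 * real n - 3) * (2 * real n - 5)"
  have K: "0 \<le> K"
    using step by (simp add: K_def)
  have "(K * binom_half n (Suc j)) * (binom_even n j * (2 * real n - 2 * real j - 1))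
      = (K * binom_half n j) * (binom_even n (Suc j) * (2 * real j + 1))"
    using binom_half_binom_even_Suc[of j n] step by (simp add: algebra_simps)
  also have "\<dots> \<le> (15 * binom_even n j) * (binom_even n (Suc j) * (2 * real j + 1))"
    using step by (intro mult_right_mono) (auto simp: K_def binom_even_nonneg)
  also have "\<dots> \<le> (15 * binom_even n (Suc j)) * (binom_even n j * (2 * real n - 2 * real j - 1))"
  proof -
    have "2 * real j + 1 \<le> 2 * real n - 2 * real j - 1"
      using step by simp
    then show ?thesis
      by (simp add: ac_simps mult_left_mono binom_even_nonneg)
  qed
  finally have "K * binom_half n (Suc j) \<le> 15 * binom_even n (Suc j)"
    by (rule mult_right_le_imp_le) (use step binom_even_pos[of j n] in auto)
  then show ?case
    by (simp add: K_def)
qed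

lemma odd_case_polynomial_bound:
  fixes J N :: real
  assumes "3 \<le> J" "2 * J \<le> N" "16 \<le> N"
  shows "15 * (J + 1) * (2 * N + 4 * J + 3) \<le> (2 * J + 1) * (2 * N - 3) * (2 * N - 5)"
proof -
  have quadratic: "60 * (4 * N + 3) \<le> 7 * ((2 * N - 3) * (2 * N - 5))"
  proof -
    have "16 * N \<le> N * N"
      using assms by (intro mult_right_mono) auto
    moreover have "7 * ((2 * N - 3) * (2 * N - 5)) = 28 * (N * N) - 112 * N + 105"
      by (simp add: algebra_simps)
    ultimately show ?thesis
      using assms by argo
  qed
  have "7 * (15 * (J + 1) * (2 * N + 4 * J + 3)) = (105 * (J + 1)) * (2 * N + 4 * J + 3)"
    by simp
  also have "\<dots> \<le> (105 * (J + 1)) * (4 * N + 3)"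
    using assms by (intro mult_left_mono) auto
  also have "\<dots> \<le> (60 * (2 * J + 1)) * (4 * N + 3)"
    using assms by (intro mult_right_mono) auto
  also have "\<dots> = (2 * J + 1) * (60 * (4 * N + 3))"
    by (simp only: ac_simps)
  also have "\<dots> \<le> (2 * J + 1) * (7 * ((2 * N - 3) * (2 * N - 5)))"
    using assms quadratic by (intro mult_left_mono) auto
  finally show ?thesis
    by (simp add: algebra_simps)
qed

section \<open>The weight formula\<close>

text \<open>\<open>scaled_weight n j\<close> is \<open>2n\<close> times the number of codewords of weight \<open>2j\<close> in the extended
  Hamming code of length \<open>2n\<close>, see \<open>card_zero_sum_sets_even\<close>.\<close>

definition scaled_weight :: "nat \<Rightarrow> nat \<Rightarrow> real" where
  "scaled_weight n j = binom_even n j + (-1) ^ j * binom_half n j"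

lemma scaled_weight_0: "scaled_weight n 0 = 2 * real n"
  by (simp add: scaled_weight_def binom_even_def binom_half_def)

lemma scaled_weight_1: "scaled_weight n 1 = 0"
  using binom_half_one[of n] by (simp add: scaled_weight_def)

lemma card_zero_sum_sets_even:
  assumes "2 ^ m = 2 * n" "j \<le> n"
  shows "2 * real n * real (card (zero_sum_sets m (2 * j))) = scaled_weight n j"
  using assms(2)
proof (induction j)
  case 0
  have "zero_sum_sets m 0 = {{}}"
    by (auto simp: zero_sum_sets_def zero_sum_def coord_count_def finite_subset_vecs)
  then show ?case
    by (simp add: scaled_weight_0)
next
  case (Suc j)
  define Z Z' where "Z = real (card (zero_sum_sets m (2 * j)))"
    and "Z' = real (card (zero_sum_sets m (2 * Suc j)))"
  define C where "C = real (2 * n choose Suc (2 * j))"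
  define s where "s = ((-1) ^ j :: real)"
  have IH: "2 * real n * Z = binom_even n j + s * binom_half n j"
    using Suc by (simp add: Z_def s_def scaled_weight_def)
  have "(2 * n choose Suc (2 * j)) = Suc (Suc (2 * j)) * card (zero_sum_sets m (2 * Suc j))
      + (2 * n - 2 * j) * card (zero_sum_sets m (2 * j))"
    using zero_sum_sets_recurrence[of m "2 * j"] assms(1) by simp
  then have "C = real (Suc (Suc (2 * j))) * Z' + real (2 * n - 2 * j) * Z"
    unfolding C_def Z_def Z'_def by (simp only: of_nat_add of_nat_mult)
  moreover have "real (2 * n - 2 * j) = 2 * real n - 2 * real j"
    using Suc.prems by (simp add: of_nat_diff)
  ultimately have "C = (2 * real j + 2) * Z' + (2 * real n - 2 * real j) * Z"
    by simp
  moreover have "(2 * real j + 1) * C = (2 * real n - 2 * real j) * binom_even n j"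
    using binomial_Suc_real[of "2 * j" "2 * n"] by (simp add: C_def binom_even_def add.commute)
  moreover have "(2 * real j + 2) * binom_even n (Suc j) = (2 * real n - 2 * real j - 1) * C"
    using binomial_Suc_real[of "Suc (2 * j)" "2 * n"] by (simp add: C_def binom_even_def algebra_simps)
  moreover have "binom_half n (Suc j) * (real j + 1) = binom_half n j * (real n - real j)"
    by (rule binom_half_Suc)
  ultimately have "(2 * real j + 2) * (2 * real n * Z')
      = (2 * real j + 2) * (binom_even n (Suc j) - s * binom_half n (Suc j))"
    using IH by algebra
  then show ?case
    by (simp add: Z'_def s_def scaled_weight_def)
qed

lemma scaled_weight_symmetric:
  assumes "even n" "j \<le> n"
  shows "scaled_weight n (n - j) = scaled_weight n j"
proof -
  have "2 * (n - j) = 2 * n - 2 * j"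
    by simp
  then have "binom_even n (n - j) = binom_even n j"
    using assms binomial_symmetric[of "2 * j" "2 * n"] by (simp add: binom_even_def)
  moreover have "binom_half n (n - j) = binom_half n j"
    using assms binomial_symmetric[of j n] by (simp add: binom_half_def)
  moreover have "even (n - j) \<longleftrightarrow> even j"
    using assms by simp
  ultimately show ?thesis
    by (simp add: scaled_weight_def minus_one_power_iff)
qed

lemma scaled_weight_pos_even:
  assumes "even j" "j \<le> n" "1 \<le> n"
  shows "0 < scaled_weight n j"
  using assms binom_even_pos[of j n] binom_half_nonneg[of n j] by (simp add: scaled_weight_def)

lemma scaled_weight_pos_odd:
  assumes "odd j" "3 \<le> j" "2 * j \<le> n"
  shows "0 < scaled_weight n j"
proof -
  have "35 * binom_half n j \<le> (2 * real n - 3) * (2 * real n - 5) * binom_half n j"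
  proof (rule mult_right_mono)
    have "(5::real) * 7 \<le> (2 * real n - 3) * (2 * real n - 5)"
      using assms by (intro mult_mono) auto
    then show "35 \<le> (2 * real n - 3) * (2 * real n - 5)"
      by simp
  qed (use assms binom_half_nonneg in auto)
  then have "binom_half n j < binom_even n j"
    using binom_half_le_binom_even[OF assms(2,3)] binom_even_pos[of j n] assms by linarith
  then show ?thesis
    using assms by (simp add: scaled_weight_def)
qed

lemma scaled_weight_log_concave_even:
  assumes "even j" "1 \<le> j" "j < n"
  shows "scaled_weight n (j - 1) * scaled_weight n (j + 1) \<le> (scaled_weight n j)\<^sup>2"
proof -
  let ?bm = "binom_even n (j - 1)" and ?b = "binom_even n j" and ?bp = "binom_even n (j + 1)"
  let ?cm = "binom_half n (j - 1)" and ?c = "binom_half n j" and ?cp = "binom_half n (j + 1)"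
  have sw: "scaled_weight n (j - 1) = ?bm - ?cm" "scaled_weight n (j + 1) = ?bp - ?cp"
    "scaled_weight n j = ?b + ?c"
    using assms by (simp_all add: scaled_weight_def)
  have "?bm * ?bp * (real j + 1) \<le> ?b\<^sup>2 * (real j + 1)"
    using binom_even_log_concave[of j n] assms
    by (smt (verit) mult_left_mono of_nat_0_le_iff zero_le_power2)
  then have b: "?bm * ?bp \<le> ?b\<^sup>2"
    by (rule mult_right_le_imp_le) simp
  have c: "?cm * ?cp \<le> ?c\<^sup>2"
    using binom_half_log_concave[of j n] assms by simp
  have "0 \<le> ?bm * ?cp" "0 \<le> ?cm * ?bp" "0 \<le> ?b * ?c"
    using assms by (simp_all add: binom_even_nonneg binom_half_nonneg)
  moreover have "(?b + ?c)\<^sup>2 - (?bm - ?cm) * (?bp - ?cp)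
      = (?b\<^sup>2 - ?bm * ?bp) + (?c\<^sup>2 - ?cm * ?cp) + ?bm * ?cp + ?cm * ?bp + 2 * (?b * ?c)"
    by algebra
  ultimately show ?thesis
    unfolding sw using b c by linarith
qed

lemma scaled_weight_log_concave_odd:
  assumes "odd j" "3 \<le> j" "2 * j \<le> n" "16 \<le> n"
  shows "scaled_weight n (j - 1) * scaled_weight n (j + 1) \<le> (scaled_weight n j)\<^sup>2"
proof -
  let ?bm = "binom_even n (j - 1)" and ?b = "binom_even n j" and ?bp = "binom_even n (j + 1)"
  let ?cm = "binom_half n (j - 1)" and ?c = "binom_half n j" and ?cp = "binom_half n (j + 1)"
  define J N where "J = real j" and "N = real n"
  have sw: "scaled_weight n (j - 1) = ?bm + ?cm" "scaled_weight n (j + 1) = ?bp + ?cp"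
    "scaled_weight n j = ?b - ?c"
    using assms by (simp_all add: scaled_weight_def)
  have nonneg: "0 \<le> ?b" "0 \<le> ?c"
    using assms by (simp_all add: binom_even_nonneg binom_half_nonneg)
  have JN: "3 \<le> J" "2 * J \<le> N" "16 \<le> N"
    using assms by (simp_all add: J_def N_def)
  have bb: "?bm * ?bp * (J + 1) \<le> ?b\<^sup>2 * J"
    using binom_even_log_concave[of j n] assms by (simp add: J_def)
  have cc: "?cm * ?cp \<le> ?c\<^sup>2"
    using binom_half_log_concave[of j n] assms by simp
  have bc: "?bm * ?cp \<le> ?b * ?c"
    using binom_even_binom_half_cross_le[of j n] assms by simp
  have cb: "?cm * ?bp * (2 * J + 1) \<le> ?b * ?c * (2 * N - 2 * J)"
    using binom_half_binom_even_cross_le[of j n] assms by (simp add: J_def N_def)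
  have small: "?c * ((J + 1) * (2 * N + 4 * J + 3)) \<le> (2 * J + 1) * ?b"
  proof -
    have "15 * (?c * ((J + 1) * (2 * N + 4 * J + 3)))
        = ?c * (15 * (J + 1) * (2 * N + 4 * J + 3))"
      by simp
    also have "\<dots> \<le> ?c * ((2 * J + 1) * (2 * N - 3) * (2 * N - 5))"
      using odd_case_polynomial_bound[OF JN] nonneg by (intro mult_left_mono)
    also have "\<dots> = (2 * J + 1) * ((2 * N - 3) * (2 * N - 5) * ?c)"
      by simp
    also have "\<dots> \<le> (2 * J + 1) * (15 * ?b)"
      using binom_half_le_binom_even[OF assms(2,3)] JN by (intro mult_left_mono) (auto simp: N_def)
    finally show ?thesis
      by simp
  qed
  define P where "P = (J + 1) * (2 * J + 1)"
  have "(2 * J + 1) * (?bm * ?bp * (J + 1)) \<le> (2 * J + 1) * (?b\<^sup>2 * J)"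
    "P * (?cm * ?cp) \<le> P * ?c\<^sup>2" "P * (?bm * ?cp) \<le> P * (?b * ?c)"
    "(J + 1) * (?cm * ?bp * (2 * J + 1)) \<le> (J + 1) * (?b * ?c * (2 * N - 2 * J))"
    "?b * (?c * ((J + 1) * (2 * N + 4 * J + 3))) \<le> ?b * ((2 * J + 1) * ?b)"
    using bb cc bc cb small nonneg JN by (simp_all add: P_def mult_left_mono)
  moreover have "P * (?b - ?c)\<^sup>2 - P * ((?bm + ?cm) * (?bp + ?cp))
      = ((2 * J + 1) * (?b\<^sup>2 * J) - (2 * J + 1) * (?bm * ?bp * (J + 1)))
        + (P * ?c\<^sup>2 - P * (?cm * ?cp)) + (P * (?b * ?c) - P * (?bm * ?cp))
        + ((J + 1) * (?b * ?c * (2 * N - 2 * J)) - (J + 1) * (?cm * ?bp * (2 * J + 1)))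
        + (?b * ((2 * J + 1) * ?b) - ?b * (?c * ((J + 1) * (2 * N + 4 * J + 3))))"
    unfolding P_def by algebra
  ultimately have "P * ((?bm + ?cm) * (?bp + ?cp)) \<le> P * (?b - ?c)\<^sup>2"
    by linarith
  then show ?thesis
    unfolding sw by (rule mult_left_le_imp_le) (use JN in \<open>simp add: P_def\<close>)
qed

lemma scaled_weight_2_3:
  assumes "3 \<le> n"
  shows "2 * real n * scaled_weight n 3 \<le> (scaled_weight n 2)\<^sup>2"
proof -
  have b1: "binom_even n 1 = real n * (2 * real n - 1)"
    using binom_even_Suc[of n 0] by (simp add: binom_even_def algebra_simps)
  have "binom_even n 1 * binom_even n 3 * 3 \<le> (binom_even n 2)\<^sup>2 * 2"
    using binom_even_log_concave[of 2 n] assms by simp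
  then have "(2 * real n * binom_even n 3) * (3 * (2 * real n - 1)) \<le> (binom_even n 2)\<^sup>2 * 4"
    unfolding b1 by (simp add: algebra_simps)
  also have "\<dots> \<le> (binom_even n 2)\<^sup>2 * (3 * (2 * real n - 1))"
    using assms by (intro mult_left_mono) auto
  finally have "2 * real n * binom_even n 3 \<le> (binom_even n 2)\<^sup>2"
    by (rule mult_right_le_imp_le) (use assms in auto)
  moreover have "scaled_weight n 3 \<le> binom_even n 3"
    using assms binom_half_nonneg[of n 3] by (simp add: scaled_weight_def)
  moreover have "binom_even n 2 \<le> scaled_weight n 2"
    using assms binom_half_nonneg[of n 2] by (simp add: scaled_weight_def)
  ultimately show ?thesis
    using binom_even_nonneg[of n 2]
    by (smt (verit) mult_left_mono of_nat_0_le_iff power_mono)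
qed

lemma scaled_weight_pos:
  assumes "even n" "2 \<le> j" "j + 2 \<le> n"
  shows "0 < scaled_weight n j"
proof (cases "even j")
  case True
  then show ?thesis
    using assms by (intro scaled_weight_pos_even) auto
next
  case False
  then have "3 \<le> j"
    using assms(2) by presburger
  show ?thesis
  proof (cases "2 * j \<le> n")
    case True
    with False \<open>3 \<le> j\<close> show ?thesis
      by (intro scaled_weight_pos_odd)
  next
    case far: False
    have "3 \<le> n - j"
      using assms False by presburger
    then have "0 < scaled_weight n (n - j)"
      using assms False far by (intro scaled_weight_pos_odd) auto
    with assms show ?thesis
      by (simp add: scaled_weight_symmetric)
  qed
qed

lemma scaled_weight_log_concave:
  assumes "n = 2 ^ k" "2 \<le> k" "3 \<le> j" "j + 3 \<le> n"
  shows "scaled_weight n (j - 1) * scaled_weight n (j + 1) \<le> (scaled_weight n j)\<^sup>2"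
proof (cases "even j")
  case True
  then show ?thesis
    using assms by (intro scaled_weight_log_concave_even) auto
next
  case odd: False
  have "even n"
    using assms by simp
  consider "k = 2" | "k = 3" | "4 \<le> k"
    using assms(2) by linarith
  then show ?thesis
  proof cases
    case 1
    then show ?thesis
      using assms by simp
  next
    case 2
    \<comment> \<open>\<open>odd_case_polynomial_bound\<close> needs \<open>n \<ge> 16\<close>, so \<open>n = 8\<close> is checked numerically.\<close>
    then have "j \<in> {3, 4, 5}"
      using assms by auto
    then have "j = 3 \<or> j = 5"
      using odd by auto
    moreover have "n = 8"
      using 2 assms by simp
    ultimately show ?thesis
      by (auto simp: scaled_weight_def binom_even_def binom_half_def binomial_fact' fact_numeral)
  next
    case 3
    have "(2::nat) ^ 4 \<le> 2 ^ k"
      using 3 by (intro power_increasing) auto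
    then have "16 \<le> n"
      using assms by simp
    show ?thesis
    proof (cases "2 * j \<le> n")
      case True
      with odd assms \<open>16 \<le> n\<close> show ?thesis
        by (intro scaled_weight_log_concave_odd)
    next
      case far: False
      have "scaled_weight n (n - j - 1) * scaled_weight n (n - j + 1) \<le> (scaled_weight n (n - j))\<^sup>2"
        using odd far assms \<open>16 \<le> n\<close> \<open>even n\<close> by (intro scaled_weight_log_concave_odd) auto
      moreover have "n - j - 1 = n - (j + 1)" "n - j + 1 = n - (j - 1)"
        using assms by auto
      ultimately have "scaled_weight n (n - (j + 1)) * scaled_weight n (n - (j - 1))
          \<le> (scaled_weight n (n - j))\<^sup>2"
        by metis
      moreover have "scaled_weight n (n - (j + 1)) = scaled_weight n (j + 1)"
        by (rule scaled_weight_symmetric) (use assms \<open>even n\<close> in auto)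
      moreover have "scaled_weight n (n - (j - 1)) = scaled_weight n (j - 1)"
        by (rule scaled_weight_symmetric) (use assms \<open>even n\<close> in auto)
      moreover have "scaled_weight n (n - j) = scaled_weight n j"
        by (rule scaled_weight_symmetric) (use assms \<open>even n\<close> in auto)
      ultimately show ?thesis
        by (simp only: mult.commute)
    qed
  qed
qed

section \<open>Log-concavity\<close>

lemma log_concave_seq_map_upt:
  "log_concave_seq (map g [a..<b]) \<longleftrightarrow> (\<forall>j. a < j \<and> j + 1 < b \<longrightarrow> g (j - 1) * g (j + 1) \<le> (g j)\<^sup>2)"
  unfolding log_concave_seq_def
proof (intro iffI allI impI)
  fix j assume lc: "\<forall>i. 1 \<le> i \<and> i + 1 < length (map g [a..<b]) \<longrightarrow>
      map g [a..<b] ! (i - 1) * map g [a..<b] ! (i + 1) \<le> (map g [a..<b] ! i)\<^sup>2"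
    and j: "a < j \<and> j + 1 < b"
  have "map g [a..<b] ! (j - a - 1) = g (j - 1)" "map g [a..<b] ! (j - a + 1) = g (j + 1)"
    "map g [a..<b] ! (j - a) = g j"
    using j by auto
  moreover have "1 \<le> j - a \<and> j - a + 1 < length (map g [a..<b])"
    using j by auto
  ultimately show "g (j - 1) * g (j + 1) \<le> (g j)\<^sup>2"
    using lc by metis
next
  fix i assume lc: "\<forall>j. a < j \<and> j + 1 < b \<longrightarrow> g (j - 1) * g (j + 1) \<le> (g j)\<^sup>2"
    and i: "1 \<le> i \<and> i + 1 < length (map g [a..<b])"
  have "map g [a..<b] ! (i - 1) = g (a + i - 1)" "map g [a..<b] ! (i + 1) = g (a + i + 1)"
    "map g [a..<b] ! i = g (a + i)"
    using i by auto
  moreover have "a < a + i \<and> a + i + 1 < b"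
    using i by auto
  ultimately show "map g [a..<b] ! (i - 1) * map g [a..<b] ! (i + 1) \<le> (map g [a..<b] ! i)\<^sup>2"
    using lc[rule_format, of "a + i"] by (simp only:)
qed

lemma upt_split_ends:
  assumes "4 \<le> (n::nat)"
  shows "[0..<Suc n] = [0, 1] @ [2..<n - 1] @ [n - 1, n]" "[1..<n] = [1] @ [2..<n - 1] @ [n - 1]"
proof -
  define p where "p = n - 2"
  have p: "n = Suc (Suc p)" "2 \<le> p"
    using assms by (simp_all add: p_def)
  show "[0..<Suc n] = [0, 1] @ [2..<n - 1] @ [n - 1, n]" "[1..<n] = [1] @ [2..<n - 1] @ [n - 1]"
    using p by (simp_all add: upt_conv_Cons numeral_2_eq_2)
qed

lemma filter_nonzero_even_positions:
  "filter (\<lambda>x. x \<noteq> 0) (map (\<lambda>w. if even w then a (w div 2) else 0) [0..<Suc (2 * n)])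
     = filter (\<lambda>x. x \<noteq> (0::nat)) (map a [0..<Suc n])"
proof (induction n)
  case (Suc n)
  have "[0..<Suc (2 * Suc n)] = [0..<Suc (2 * n)] @ [Suc (2 * n), Suc (Suc (2 * n))]"
    "[0..<Suc (Suc n)] = [0..<Suc n] @ [Suc n]"
    by simp_all
  then show ?case
    using Suc by simp
qed simp

text \<open>Under these hypotheses the nonzero entries are \<open>1, a 2, \<dots>, a (n - 2), 1\<close>.\<close>

lemma log_concave_seq_filter_nonzero:
  fixes a :: "nat \<Rightarrow> nat"
  assumes "4 \<le> n" "a 0 = 1" "a 1 = 0"
    and sym: "\<And>j. j \<le> n \<Longrightarrow> a (n - j) = a j"
    and pos: "\<And>j. 2 \<le> j \<Longrightarrow> j + 2 \<le> n \<Longrightarrow> 0 < a j"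
    and ends: "a 3 \<le> (a 2)\<^sup>2"
    and lc: "\<And>j. 3 \<le> j \<Longrightarrow> j + 3 \<le> n \<Longrightarrow> a (j - 1) * a (j + 1) \<le> (a j)\<^sup>2"
  shows "log_concave_seq (filter (\<lambda>x. x \<noteq> 0) (map a [0..<Suc n]))"
proof -
  define b where "b = a(1 := 1, n - 1 := 1)"
  have "a n = 1" "a (n - 1) = 0"
    using sym[of 0] sym[of 1] assms by simp_all
  moreover have "filter (\<lambda>x. x \<noteq> 0) (map a [2..<n - 1]) = map a [2..<n - 1]"
    using pos by (intro filter_True) auto
  moreover have "map b [2..<n - 1] = map a [2..<n - 1]"
    by (rule map_cong) (auto simp: b_def)
  ultimately have "filter (\<lambda>x. x \<noteq> 0) (map a [0..<Suc n]) = map b [1..<n]"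
    unfolding upt_split_ends[OF assms(1)] using assms by (simp add: b_def)
  moreover have "log_concave_seq (map b [1..<n])"
    unfolding log_concave_seq_map_upt
  proof (intro allI impI)
    fix j assume j: "1 < j \<and> j + 1 < n"
    have "b j = a j"
      using j by (auto simp: b_def)
    consider "j = 2" "n = 4" | "j = 2" "n \<noteq> 4" | "j = n - 2" "j \<noteq> 2" | "3 \<le> j" "j + 3 \<le> n"
      using j by linarith
    then show "b (j - 1) * b (j + 1) \<le> (b j)\<^sup>2"
    proof cases
      case 1
      then show ?thesis
        using pos[of 2] by (simp add: b_def)
    next
      case 2
      then have "n - 1 \<noteq> 3" "n - 1 \<noteq> 1" "n - 1 \<noteq> 2"
        using assms by auto
      then show ?thesis
        using 2 ends by (simp add: b_def)
    next
      case 3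
      then have "j - 1 = n - 3" "j + 1 = n - 1" "n - 3 \<noteq> 1" "n - 3 \<noteq> n - 1"
        using j by auto
      then have "b (j - 1) = a 3" "b (j + 1) = 1" "b j = a 2"
        using 3 sym[of 3] sym[of 2] assms \<open>b j = a j\<close> by (simp_all add: b_def)
      then show ?thesis
        using ends by (simp add: mult.commute)
    next
      case 4
      then have "b (j - 1) = a (j - 1)" "b (j + 1) = a (j + 1)"
        by (auto simp: b_def)
      then show ?thesis
        using 4 lc \<open>b j = a j\<close> by simp
    qed
  qed
  ultimately show ?thesis
    by simp
qed

lemma mult_le_square_of_scaled:
  fixes x y z :: nat and D p q r :: real
  assumes "0 < D" "D * real x = p" "D * real y = q" "D * real z = r" "p * q \<le> r\<^sup>2"
  shows "x * y \<le> z\<^sup>2"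
proof -
  have "D\<^sup>2 * (real x * real y) = p * q" "D\<^sup>2 * (real z)\<^sup>2 = r\<^sup>2"
    using assms(2-4) by (auto simp: power2_eq_square mult_ac)
  then have "D\<^sup>2 * (real x * real y) \<le> D\<^sup>2 * (real z)\<^sup>2"
    using assms(5) by simp
  then have "real (x * y) \<le> real (z\<^sup>2)"
    using assms(1) by simp
  then show ?thesis
    by (simp only: of_nat_le_iff)
qed

lemma log_concave_zero_sum_sets_even:
  assumes "3 \<le> m"
  defines "n \<equiv> 2 ^ (m - 1)"
  shows "log_concave_seq
    (filter (\<lambda>x. x \<noteq> 0) (map (\<lambda>j. card (zero_sum_sets m (2 * j))) [0..<Suc n]))"
proof (rule log_concave_seq_filter_nonzero)
  have "(2::nat) ^ 2 \<le> 2 ^ (m - 1)"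
    using assms by (intro power_increasing) auto
  then show n: "4 \<le> n"
    by (simp add: n_def)
  have "2 ^ m = 2 * n"
    using assms by (cases m) (simp_all add: n_def)
  define D where "D = 2 * real n"
  have D: "0 < D"
    using n by (simp add: D_def)
  have count: "D * real (card (zero_sum_sets m (2 * j))) = scaled_weight n j" if "j \<le> n" for j
    using card_zero_sum_sets_even[OF \<open>2 ^ m = 2 * n\<close> that] by (simp add: D_def)
  show "card (zero_sum_sets m (2 * 0)) = 1"
    using count[of 0] D by (simp add: scaled_weight_0 D_def)
  show "card (zero_sum_sets m (2 * 1)) = 0"
    using count[of 1] D n scaled_weight_1[of n] by simp
  have "even n"
    using assms by (simp add: n_def)
  show "card (zero_sum_sets m (2 * (n - j))) = card (zero_sum_sets m (2 * j))" if "j \<le> n" for j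
  proof -
    have "D * real (card (zero_sum_sets m (2 * (n - j)))) = D * real (card (zero_sum_sets m (2 * j)))"
      using count[of j] count[of "n - j"] scaled_weight_symmetric[OF \<open>even n\<close> that] that by simp
    then show ?thesis
      using D by simp
  qed
  show "0 < card (zero_sum_sets m (2 * j))" if "2 \<le> j" "j + 2 \<le> n" for j
  proof -
    have "0 < D * real (card (zero_sum_sets m (2 * j)))"
      using count[of j] that scaled_weight_pos[OF \<open>even n\<close> that] by simp
    then show ?thesis
      using D by (simp add: zero_less_mult_iff)
  qed
  show "card (zero_sum_sets m (2 * 3)) \<le> (card (zero_sum_sets m (2 * 2)))\<^sup>2"
    using mult_le_square_of_scaled[where x = 1 and p = D, OF D _ count[of 3] count[of 2]]
      scaled_weight_2_3[of n] n
    by (simp add: D_def)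
  show "card (zero_sum_sets m (2 * (j - 1))) * card (zero_sum_sets m (2 * (j + 1)))
      \<le> (card (zero_sum_sets m (2 * j)))\<^sup>2" if "3 \<le> j" "j + 3 \<le> n" for j
    using that assms
    by (intro mult_le_square_of_scaled[OF D count count count] scaled_weight_log_concave[of n "m - 1"])
      (simp_all add: n_def)
qed

theorem mainTheorem2:
  fixes m :: nat
  assumes "m \<ge> 3"
  shows "log_concave_code (2 ^ m) (ext_hamming_code m)"
proof -
  define n :: nat where "n = 2 ^ (m - 1)"
  have "2 ^ m = 2 * n"
    using assms by (cases m) (simp_all add: n_def)
  have "map (weight_count (ext_hamming_code m)) [0..<Suc (2 ^ m)]
      = map (\<lambda>w. if even w then card (zero_sum_sets m (2 * (w div 2))) else 0) [0..<Suc (2 * n)]"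
    unfolding \<open>2 ^ m = 2 * n\<close> by (rule map_cong) (auto simp: weight_count_ext_hamming_code)
  then have "nonzero_weight_distribution (2 ^ m) (ext_hamming_code m)
      = filter (\<lambda>x. x \<noteq> 0) (map (\<lambda>j. card (zero_sum_sets m (2 * j))) [0..<Suc n])"
    unfolding nonzero_weight_distribution_def
    by (simp only: filter_nonzero_even_positions[of "\<lambda>j. card (zero_sum_sets m (2 * j))" n])
  then show ?thesis
    using log_concave_zero_sum_sets_even[OF assms] by (simp add: log_concave_code_def n_def)
qed

end
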